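(* Let $K$ be a finite simplicial complex, $|\cdot|$ a norm on $\mathbb{R}^n$, $f\colon|K|\to\mathbb{R}^n$ a piecewise linear function such that on every simplex of $K$ the function $x\mapsto|f(x)|$ attains both its minimum and its maximum at a vertex, and let $\alpha>0$. Let $\chi\colon|K|\to\mathbb{R}$ be the piecewise linear function with vertex values $\chi(v)=0$ if $|f(v)|<\alpha$, $\chi(v)=1/2$ if $|f(v)|=\alpha$, and $\chi(v)=1$ if $|f(v)|>\alpha$, and put $X:=\chi^{-1}([0,1/2])$ and $A:=\chi^{-1}(\{1/2\})$. Then there exists a continuous extension $F\colon|f|^{-1}([0,\alpha])\to\mathbb{R}^n\setminus\{0\}$ of $f|_{|f|^{-1}(\{\alpha\})}$ if and only if there exists a continuous extension $G\colon X\to\mathbb{R}^n\setminus\{0\}$ of $f|_A$.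
   Context: A function is piecewise linear on $|K|$ if it is affine on each simplex of $K$; $|f|$ denotes $x\mapsto|f(x)|$. *)

theory Defs
  imports "HOL-Analysis.Analysis"
begin

definition is_norm :: "('b::real_vector \<Rightarrow> real) \<Rightarrow> bool" where
  "is_norm N \<longleftrightarrow> (\<forall>x. N x = 0 \<longleftrightarrow> x = 0) \<and>
                  (\<forall>c x. N (c *\<^sub>R x) = \<bar>c\<bar> * N x) \<and>
                  (\<forall>x y. N (x + y) \<le> N x + N y)"

text \<open>Underlying space of a geometric simplicial complex (K is a set of simplices,
  as in the library notion simplicial_complex).\<close>
definition polyhedron :: "'a::euclidean_space set set \<Rightarrow> 'a set" where
  "polyhedron K = \<Union>K"

definition cvertices :: "'a::euclidean_space set set \<Rightarrow> 'a set" where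
  "cvertices K = {v. {v} \<in> K}"

definition piecewise_linear_on :: "'a::euclidean_space set set \<Rightarrow> ('a \<Rightarrow> 'b::real_vector) \<Rightarrow> bool" where
  "piecewise_linear_on K f \<longleftrightarrow>
     (\<forall>S\<in>K. \<exists>h c. linear h \<and> (\<forall>x\<in>S. f x = h x + c))"

end

theory Submission
  imports Defs
begin

text \<open>Both extension problems are equivalent to extending f, without zeros, from a closed
  subset of |K| to all of |K| (glue the extension with f itself): from Z1 = {alpha \<le> |f|} in
  the first case and from Z2 = {1/2 \<le> chi} in the second. The two closed sets are linked by
  a straight-line deformation pushing a point off the vertices with |f| < alpha onto the
  opposite face of its carrier simplex. Because |f| attains its minimum on every face at a
  vertex, f has no zero along the deformation, the endpoint lies in Z1 \<inter> Z2, and points of Z1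
  stay in Z1. So on either set a nonvanishing map H agreeing with f on the other set is
  homotopic to f through nonvanishing maps, and Borsuk's homotopy extension theorem finishes.\<close>

lemma is_norm_eq_0: "is_norm N \<Longrightarrow> N x = 0 \<longleftrightarrow> x = 0"
  unfolding is_norm_def by blast

lemma is_norm_scaleR: "is_norm N \<Longrightarrow> N (c *\<^sub>R x) = \<bar>c\<bar> * N x"
  unfolding is_norm_def by blast

lemma is_norm_triangle: "is_norm N \<Longrightarrow> N (x + y) \<le> N x + N y"
  unfolding is_norm_def by blast

lemma is_norm_0: "is_norm N \<Longrightarrow> N 0 = 0"
  by (simp add: is_norm_eq_0)

lemma is_norm_minus: "is_norm N \<Longrightarrow> N (- x) = N x"
  using is_norm_scaleR[of N "-1" x] by simp

lemma is_norm_ge_zero: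
  assumes "is_norm N" shows "0 \<le> N x"
  using is_norm_triangle[OF assms, of x "-x"] assms by (simp add: is_norm_0 is_norm_minus)

lemma is_norm_diff_ge: "is_norm N \<Longrightarrow> N x - N y \<le> N (x - y)"
  using is_norm_triangle[of N "x - y" y] by simp

lemma is_norm_sum_scaleR_le:
  assumes N: "is_norm N" and "finite A" and "\<forall>i\<in>A. 0 \<le> \<mu> i"
  shows "N (\<Sum>i\<in>A. \<mu> i *\<^sub>R u i) \<le> (\<Sum>i\<in>A. \<mu> i * N (u i))"
  using assms(2,3)
proof (induction A rule: finite_induct)
  case empty then show ?case by (simp add: is_norm_0[OF N])
next
  case (insert a A)
  then show ?case
    using is_norm_triangle[OF N, of "\<mu> a *\<^sub>R u a" "\<Sum>i\<in>A. \<mu> i *\<^sub>R u i"]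
    by (simp add: is_norm_scaleR[OF N])
qed

lemma lipschitz_on_is_norm:
  fixes N :: "'b::euclidean_space \<Rightarrow> real"
  assumes N: "is_norm N"
  shows "(\<Sum>b\<in>Basis. N b)-lipschitz_on S N"
proof (rule lipschitz_onI)
  have bound: "N x \<le> (\<Sum>b\<in>Basis. N b) * norm x" for x
  proof -
    have "N x = N (\<Sum>b\<in>Basis. (x \<bullet> b) *\<^sub>R b)" by (simp add: euclidean_representation)
    also have "\<dots> \<le> (\<Sum>b\<in>Basis. N ((x \<bullet> b) *\<^sub>R b))"
      using is_norm_sum_scaleR_le[OF N, of Basis "\<lambda>_. 1" "\<lambda>b. (x \<bullet> b) *\<^sub>R b"] by simp
    also have "\<dots> \<le> (\<Sum>b\<in>Basis. norm x * N b)"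
      by (intro sum_mono)
        (simp add: is_norm_scaleR[OF N] Basis_le_norm is_norm_ge_zero[OF N] mult_right_mono)
    finally show ?thesis by (simp add: sum_distrib_left mult.commute)
  qed
  fix x y
  have "N x - N y \<le> N (x - y)" "N y - N x \<le> N (x - y)"
    using is_norm_diff_ge[OF N, of x y] is_norm_diff_ge[OF N, of y x]
      is_norm_minus[OF N, of "x - y"] by simp_all
  then show "dist (N x) (N y) \<le> (\<Sum>b\<in>Basis. N b) * dist x y"
    using bound[of "x - y"] by (simp add: dist_real_def dist_norm)
next
  show "0 \<le> (\<Sum>b\<in>Basis. N b)" by (simp add: sum_nonneg is_norm_ge_zero[OF N])
qed

lemma continuous_on_is_norm:
  fixes N :: "'b::euclidean_space \<Rightarrow> real"
  shows "is_norm N \<Longrightarrow> continuous_on S N"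
  using lipschitz_on_continuous_on lipschitz_on_is_norm by blast

section \<open>Barycentric coordinates\<close>

text \<open>The coordinates are extended by 0 outside C, so that coordinates with respect to a face
  are also coordinates with respect to the whole simplex.\<close>
definition barycentric_coords :: "'a::real_vector set \<Rightarrow> ('a \<Rightarrow> real) \<Rightarrow> 'a \<Rightarrow> bool" where
  "barycentric_coords C \<mu> x \<longleftrightarrow> (\<forall>w. w \<notin> C \<longrightarrow> \<mu> w = 0) \<and> (\<forall>w\<in>C. 0 \<le> \<mu> w) \<and>
     sum \<mu> C = 1 \<and> (\<Sum>w\<in>C. \<mu> w *\<^sub>R w) = x"

lemma barycentric_coords_imp_in_convex_hull:
  "finite C \<Longrightarrow> barycentric_coords C \<mu> x \<Longrightarrow> x \<in> convex hull C"
  unfolding barycentric_coords_def convex_hull_finite by blast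

lemma barycentric_coords_exists:
  assumes "finite C" "x \<in> convex hull C"
  obtains \<mu> where "barycentric_coords C \<mu> x"
proof -
  obtain u where u: "\<forall>w\<in>C. 0 \<le> u w" "sum u C = 1" "(\<Sum>w\<in>C. u w *\<^sub>R w) = x"
    using assms unfolding convex_hull_finite[OF assms(1)] by blast
  have "barycentric_coords C (\<lambda>w. if w \<in> C then u w else 0) x"
    unfolding barycentric_coords_def using u by (auto intro: sum.cong)
  then show ?thesis using that by blast
qed

lemma barycentric_coords_superset:
  assumes "finite C" "D \<subseteq> C" "barycentric_coords D \<mu> x"
  shows "barycentric_coords C \<mu> x"
proof -
  have "\<forall>w\<in>C - D. \<mu> w = 0" using assms(3) unfolding barycentric_coords_def by auto
  then have "sum \<mu> C = sum \<mu> D" "(\<Sum>w\<in>C. \<mu> w *\<^sub>R w) = (\<Sum>w\<in>D. \<mu> w *\<^sub>R w)"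
    by (auto intro: sum.mono_neutral_right[OF assms(1,2)])
  then show ?thesis using assms(2,3) unfolding barycentric_coords_def by auto
qed

lemma barycentric_coords_unique:
  assumes C: "finite C" "\<not> affine_dependent C"
    and "barycentric_coords C \<mu> x" "barycentric_coords C \<nu> x"
  shows "\<mu> = \<nu>"
proof
  fix w
  have "sum (\<lambda>w. \<mu> w - \<nu> w) C = 0" "(\<Sum>w\<in>C. (\<mu> w - \<nu> w) *\<^sub>R w) = 0"
    using assms(3,4) unfolding barycentric_coords_def
    by (simp_all add: sum_subtractf scaleR_diff_left)
  then have "\<forall>w\<in>C. \<mu> w = \<nu> w" using C affine_dependent_explicit_finite by fastforce
  then show "\<mu> w = \<nu> w" using assms(3,4) unfolding barycentric_coords_def by (cases "w \<in> C") auto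
qed

lemma barycentric_coordinate_affine:
  fixes C :: "'a::euclidean_space set"
  assumes C: "finite C" "\<not> affine_dependent C" and v: "v \<in> C"
  obtains g :: "'a \<Rightarrow> real" and c where "linear g"
    "\<And>m. sum m C = 1 \<Longrightarrow> m v = g (\<Sum>w\<in>C. m w *\<^sub>R w) + c"
proof (cases "C = {v}")
  case True
  then show ?thesis using that[of "\<lambda>_. 0" 1] by (simp add: linear_zero)
next
  case False
  then obtain c0 where c0: "c0 \<in> C" "c0 \<noteq> v" using v by blast
  let ?B = "(\<lambda>x. -c0 + x) ` (C - {c0})"
  have "\<not> dependent ?B" using affine_dependent_iff_dependent2[OF c0(1)] C(2) by simp
  then obtain g :: "'a \<Rightarrow> real" where g: "linear g" "\<forall>b\<in>?B. g b = (if b = -c0 + v then 1 else 0)"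
    using linear_independent_extend[of ?B "\<lambda>b. if b = -c0 + v then 1 else 0"] by auto
  have "m v = g (\<Sum>w\<in>C. m w *\<^sub>R w) - g c0" if m: "sum m C = 1" for m
  proof -
    have "(\<Sum>w\<in>C. m w *\<^sub>R w) - c0 = (\<Sum>w\<in>C. m w *\<^sub>R (-c0 + w))"
      using m by (simp add: scaleR_sum_left[symmetric] scaleR_diff_right sum_subtractf)
    also have "\<dots> = (\<Sum>w\<in>C - {c0}. m w *\<^sub>R (-c0 + w))"
      using c0(1) C(1) by (simp add: sum.remove)
    finally have "g (\<Sum>w\<in>C. m w *\<^sub>R w) - g c0 = (\<Sum>w\<in>C - {c0}. m w * g (-c0 + w))"
      unfolding linear_diff[OF g(1), symmetric] using g(1) by (simp add: linear_sum linear_scale)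
    also have "\<dots> = (\<Sum>w\<in>C - {c0}. if w = v then m w else 0)"
      using g(2) by (intro sum.cong) auto
    also have "\<dots> = m v" using v c0 C(1) by simp
    finally show ?thesis by simp
  qed
  then show ?thesis using that[of g "- g c0"] g(1) by simp
qed

lemma convex_comb_in_convex_hull:
  "finite C \<Longrightarrow> \<forall>w\<in>C. 0 \<le> \<mu> w \<Longrightarrow> sum \<mu> C = 1 \<Longrightarrow> (\<Sum>w\<in>C. \<mu> w *\<^sub>R w) \<in> convex hull C"
  unfolding convex_hull_finite by blast

lemma piecewise_linear_on_convex_comb:
  assumes pl: "piecewise_linear_on K \<phi>" and S: "convex hull C \<in> K" and C: "finite C"
    and \<mu>: "\<forall>w\<in>C. 0 \<le> \<mu> w" "sum \<mu> C = 1"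
  shows "\<phi> (\<Sum>w\<in>C. \<mu> w *\<^sub>R w) = (\<Sum>w\<in>C. \<mu> w *\<^sub>R \<phi> w)"
proof -
  obtain h c where hc: "linear h" "\<forall>x\<in>convex hull C. \<phi> x = h x + c"
    using pl S unfolding piecewise_linear_on_def by blast
  have "\<phi> (\<Sum>w\<in>C. \<mu> w *\<^sub>R w) = (\<Sum>w\<in>C. \<mu> w *\<^sub>R h w) + (\<Sum>w\<in>C. \<mu> w) *\<^sub>R c"
    using hc convex_comb_in_convex_hull[OF C \<mu>] \<mu>(2) by (simp add: linear_sum linear_scale)
  also have "\<dots> = (\<Sum>w\<in>C. \<mu> w *\<^sub>R (h w + c))"
    by (simp add: scaleR_add_right sum.distrib scaleR_sum_left)
  also have "\<dots> = (\<Sum>w\<in>C. \<mu> w *\<^sub>R \<phi> w)"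
    using hc(2) hull_inc[of _ C] by (intro sum.cong) auto
  finally show ?thesis .
qed

lemma homotopic_with_canon_intro:
  fixes k :: "real \<times> 'a::topological_space \<Rightarrow> 'b::topological_space"
  assumes "continuous_on ({0..1} \<times> S) k" "k ` ({0..1} \<times> S) \<subseteq> U"
    "\<forall>x\<in>S. k (0, x) = p x" "\<forall>x\<in>S. k (1, x) = q x"
  shows "homotopic_with_canon (\<lambda>x. True) S U p q"
  using assms
  by (subst homotopic_with, simp)
    (intro exI[of _ k], auto simp: continuous_map_subtopology_eu)

definition has_nonvanishing_extension ::
    "'a::topological_space set \<Rightarrow> 'a set \<Rightarrow> ('a \<Rightarrow> 'b::real_normed_vector) \<Rightarrow> bool" where
  "has_nonvanishing_extension S T g \<longleftrightarrow>
     (\<exists>F. continuous_on S F \<and> F ` S \<subseteq> - {0} \<and> (\<forall>x\<in>T. F x = g x))"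

lemma has_nonvanishing_extension_sublevel_iff:
  fixes \<phi> :: "'a::topological_space \<Rightarrow> real"
  assumes \<phi>: "continuous_on P \<phi>" and g: "continuous_on P g"
    and nz: "\<forall>x\<in>P. c \<le> \<phi> x \<longrightarrow> g x \<noteq> 0"
  shows "has_nonvanishing_extension {x\<in>P. \<phi> x \<le> c} {x\<in>P. \<phi> x = c} g
     \<longleftrightarrow> has_nonvanishing_extension P {x\<in>P. c \<le> \<phi> x} g"
  unfolding has_nonvanishing_extension_def
proof (intro iffI; elim exE conjE)
  fix F assume F: "continuous_on {x\<in>P. \<phi> x \<le> c} F" "F ` {x\<in>P. \<phi> x \<le> c} \<subseteq> - {0}"
    "\<forall>x\<in>{x\<in>P. \<phi> x = c}. F x = g x"
  let ?H = "\<lambda>x. if \<phi> x \<le> c then F x else g x"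
  have "continuous_on P ?H"
    by (rule continuous_on_cases_le[OF F(1) continuous_on_subset[OF g] \<phi>]) (use F(3) in auto)
  moreover have "?H ` P \<subseteq> - {0}" using F(2) nz by auto
  ultimately show "\<exists>H. continuous_on P H \<and> H ` P \<subseteq> - {0} \<and> (\<forall>x\<in>{x\<in>P. c \<le> \<phi> x}. H x = g x)"
    using F(3) by (intro exI[of _ ?H]) auto
next
  fix H assume "continuous_on P H" "H ` P \<subseteq> - {0}" "\<forall>x\<in>{x\<in>P. c \<le> \<phi> x}. H x = g x"
  then show "\<exists>F. continuous_on {x\<in>P. \<phi> x \<le> c} F \<and> F ` {x\<in>P. \<phi> x \<le> c} \<subseteq> - {0} \<and>
      (\<forall>x\<in>{x\<in>P. \<phi> x = c}. F x = g x)"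
    by (intro exI[of _ H]) (auto elim: continuous_on_subset)
qed

section \<open>Simplicial complexes\<close>

locale geometric_complex =
  fixes K :: "'a::euclidean_space set set"
  assumes simplicial_complex: "simplicial_complex K"
begin

lemma finite_complex: "finite K"
  using simplicial_complex unfolding simplicial_complex_def by auto

lemma simplex_in_complex:
  assumes "S \<in> K"
  obtains C where "finite C" "\<not> affine_dependent C" "S = convex hull C"
  using simplicial_complex assms unfolding simplicial_complex_def simplex by blast

lemma face_in_complex:
  assumes "convex hull C \<in> K" "\<not> affine_dependent C" "D \<subseteq> C"
  shows "convex hull D \<in> K"
proof -
  have "convex hull D face_of convex hull C"
    using face_of_convex_hull_affine_independent[OF assms(2)] assms(3) by blast
  then show ?thesis using simplicial_complex assms(1) unfolding simplicial_complex_def by blast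
qed

lemma simplex_vertices_subset_cvertices:
  assumes "convex hull C \<in> K" "\<not> affine_dependent C"
  shows "C \<subseteq> cvertices K"
  using face_in_complex[OF assms, of "{_}"] unfolding cvertices_def by auto

lemma finite_cvertices: "finite (cvertices K)"
proof -
  have "cvertices K = (\<lambda>v. {v}) -` K" unfolding cvertices_def by auto
  then show ?thesis using finite_vimageI[OF finite_complex, of "\<lambda>v. {v}"] by (simp add: inj_on_def)
qed

lemma closed_simplex: "S \<in> K \<Longrightarrow> closed S"
  by (metis simplex_in_complex compact_convex_hull finite_imp_compact compact_imp_closed)

text \<open>Two simplices meet in a common face, so the barycentric coordinates of a point do not
  depend on the simplex used to compute them.\<close>
lemma barycentric_coords_unique_in_complex:
  assumes "convex hull C \<in> K" "convex hull C' \<in> K" "\<not> affine_dependent C" "\<not> affine_dependent C'"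
    "barycentric_coords C \<mu> x" "barycentric_coords C' \<mu>' x"
  shows "\<mu> = \<mu>'"
proof -
  have fin: "finite C" "finite C'" using assms(3,4) aff_independent_finite by auto
  have x: "x \<in> convex hull C \<inter> convex hull C'"
    using barycentric_coords_imp_in_convex_hull fin assms(5,6) by blast
  have "(convex hull C \<inter> convex hull C') face_of convex hull C"
    "(convex hull C' \<inter> convex hull C) face_of convex hull C'"
    using simplicial_complex assms(1,2) unfolding simplicial_complex_def by blast+
  then obtain D D' where D: "D \<subseteq> C" "convex hull C \<inter> convex hull C' = convex hull D"
    and D': "D' \<subseteq> C'" "convex hull C \<inter> convex hull C' = convex hull D'"
    using face_of_convex_hull_affine_independent assms(3,4) by (metis Int_commute)
  have "\<not> affine_dependent D" "\<not> affine_dependent D'"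
    using D(1) D'(1) assms(3,4) affine_independent_subset by blast+
  then have "D = {y. y extreme_point_of convex hull D}" "D' = {y. y extreme_point_of convex hull D'}"
    using extreme_point_of_convex_hull_affine_independent by blast+
  then have "D = D'" using D(2) D'(2) by simp
  have "finite D" using fin(1) D(1) finite_subset by blast
  then obtain \<nu> where \<nu>: "barycentric_coords D \<nu> x"
    using barycentric_coords_exists x D(2) by metis
  have "\<mu> = \<nu>"
    using barycentric_coords_unique[OF fin(1) assms(3) assms(5)]
      barycentric_coords_superset[OF fin(1) D(1) \<nu>] by blast
  moreover have "\<mu>' = \<nu>"
    using barycentric_coords_unique[OF fin(2) assms(4) assms(6)]
      barycentric_coords_superset[OF fin(2) D'(1)] \<nu> \<open>D = D'\<close> by blast
  ultimately show ?thesis by simp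
qed

definition carrier :: "'a \<Rightarrow> 'a set" where
  "carrier x = (SOME C. convex hull C \<in> K \<and> \<not> affine_dependent C \<and> x \<in> convex hull C)"

definition bary :: "'a \<Rightarrow> 'a \<Rightarrow> real" where
  "bary x = (SOME \<mu>. barycentric_coords (carrier x) \<mu> x)"

context
  fixes x assumes x: "x \<in> polyhedron K"
begin

lemma carrier_simplex:
  "convex hull (carrier x) \<in> K" "\<not> affine_dependent (carrier x)" "x \<in> convex hull (carrier x)"
proof -
  obtain S where "S \<in> K" "x \<in> S" using x unfolding polyhedron_def by blast
  then have "\<exists>C. convex hull C \<in> K \<and> \<not> affine_dependent C \<and> x \<in> convex hull C"
    by (metis simplex_in_complex)
  from someI_ex[OF this] show "convex hull (carrier x) \<in> K" "\<not> affine_dependent (carrier x)"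
    "x \<in> convex hull (carrier x)" unfolding carrier_def by blast+
qed

lemma finite_carrier: "finite (carrier x)"
  using carrier_simplex(2) aff_independent_finite by blast

lemma carrier_subset_cvertices: "carrier x \<subseteq> cvertices K"
  using simplex_vertices_subset_cvertices carrier_simplex by blast

lemma barycentric_coords_bary_carrier: "barycentric_coords (carrier x) (bary x) x"
proof -
  obtain \<mu> where "barycentric_coords (carrier x) \<mu> x"
    using barycentric_coords_exists[OF finite_carrier carrier_simplex(3)] .
  then show ?thesis unfolding bary_def by (rule someI[where P="\<lambda>\<mu>. barycentric_coords (carrier x) \<mu> x"])
qed

lemma bary_nonneg: "0 \<le> bary x w"
  using barycentric_coords_bary_carrier unfolding barycentric_coords_def by (cases "w \<in> carrier x") auto

lemma sum_bary_carrier: "sum (bary x) (carrier x) = 1"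
  using barycentric_coords_bary_carrier unfolding barycentric_coords_def by blast

lemma bary_carrier_comb: "(\<Sum>w\<in>carrier x. bary x w *\<^sub>R w) = x"
  using barycentric_coords_bary_carrier unfolding barycentric_coords_def by blast

lemma sum_cvertices_eq_sum_carrier:
  assumes "\<And>v. bary x v = 0 \<Longrightarrow> h v = 0"
  shows "sum h (cvertices K) = sum h (carrier x)"
  using barycentric_coords_bary_carrier assms unfolding barycentric_coords_def
  by (intro sum.mono_neutral_right[OF finite_cvertices carrier_subset_cvertices]) auto

lemma piecewise_linear_carrier_expansion:
  "piecewise_linear_on K \<phi> \<Longrightarrow> \<phi> x = (\<Sum>w\<in>carrier x. bary x w *\<^sub>R \<phi> w)"
  using piecewise_linear_on_convex_comb[OF _ carrier_simplex(1) finite_carrier, of \<phi> "bary x"]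
    bary_nonneg sum_bary_carrier bary_carrier_comb by simp

end

lemma barycentric_coords_bary:
  assumes "convex hull C \<in> K" "\<not> affine_dependent C" "x \<in> convex hull C"
  shows "barycentric_coords C (bary x) x"
proof -
  have x: "x \<in> polyhedron K" using assms(1,3) unfolding polyhedron_def by blast
  have "finite C" using assms(2) aff_independent_finite by blast
  then obtain \<mu> where \<mu>: "barycentric_coords C \<mu> x"
    using barycentric_coords_exists assms(3) by blast
  have "\<mu> = bary x"
    using barycentric_coords_unique_in_complex[OF assms(1) carrier_simplex(1)[OF x] assms(2)
        carrier_simplex(2)[OF x] \<mu> barycentric_coords_bary_carrier[OF x]] .
  then show ?thesis using \<mu> by simp
qed

lemma continuous_on_piecewise_linear:
  fixes \<phi> :: "'a \<Rightarrow> 'b::real_normed_vector"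
  assumes pl: "piecewise_linear_on K \<phi>"
  shows "continuous_on (polyhedron K) \<phi>"
proof -
  have "continuous_on (\<Union>S\<in>K. S) \<phi>"
  proof (rule continuous_on_closed_Union[OF finite_complex closed_simplex])
    fix S assume S: "S \<in> K"
    obtain h c where hc: "linear h" "\<forall>x\<in>S. \<phi> x = h x + c"
      using pl S unfolding piecewise_linear_on_def by blast
    have "continuous_on S (\<lambda>x. h x + c)"
      using hc(1) by (intro continuous_intros) (simp add: linear_continuous_on linear_conv_bounded_linear)
    then show "continuous_on S \<phi>" using hc(2) continuous_on_eq by (metis (no_types, lifting))
  qed
  then show ?thesis unfolding polyhedron_def by simp
qed

lemma piecewise_linear_bary: "piecewise_linear_on K (\<lambda>x. bary x v)"
  unfolding piecewise_linear_on_def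
proof
  fix S assume "S \<in> K"
  then obtain C where C: "finite C" "\<not> affine_dependent C" "S = convex hull C"
    using simplex_in_complex by blast
  then have coords: "barycentric_coords C (bary x) x" if "x \<in> S" for x
    using barycentric_coords_bary \<open>S \<in> K\<close> that by blast
  show "\<exists>h c. linear h \<and> (\<forall>x\<in>S. bary x v = h x + c)"
  proof (cases "v \<in> C")
    case False
    then show ?thesis using coords unfolding barycentric_coords_def
      by (intro exI[of _ "\<lambda>x. 0"] exI[of _ 0]) (auto simp: linear_zero)
  next
    case True
    then obtain g :: "'a \<Rightarrow> real" and c where "linear g"
      "\<And>m. sum m C = 1 \<Longrightarrow> m v = g (\<Sum>w\<in>C. m w *\<^sub>R w) + c"
      using barycentric_coordinate_affine[OF C(1,2)] by blast
    then have "\<forall>x\<in>S. bary x v = g x + c" using coords unfolding barycentric_coords_def by metis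
    then show ?thesis using \<open>linear g\<close> by blast
  qed
qed

lemma continuous_on_bary: "continuous_on (polyhedron K) (\<lambda>x. bary x v)"
  by (rule continuous_on_piecewise_linear[OF piecewise_linear_bary])

end

locale min_norm_at_vertices = geometric_complex K
  for K :: "'a::euclidean_space set set" +
  fixes N :: "'b::euclidean_space \<Rightarrow> real" and f :: "'a \<Rightarrow> 'b"
  assumes norm: "is_norm N"
    and f_pl: "piecewise_linear_on K f"
    and f_min: "\<forall>S\<in>K. S \<noteq> {} \<longrightarrow> (\<exists>v. v extreme_point_of S \<and> (\<forall>x\<in>S. N (f v) \<le> N (f x)))"
begin

lemma min_norm_vertex_in_support:
  assumes S: "convex hull C \<in> K" and C: "\<not> affine_dependent C"
    and \<mu>: "\<forall>w\<in>C. 0 \<le> \<mu> w" "sum \<mu> C = 1"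
  shows "\<exists>v\<in>C. 0 < \<mu> v \<and> N (f v) \<le> N (f (\<Sum>w\<in>C. \<mu> w *\<^sub>R w))"
proof -
  define D where "D = {w\<in>C. 0 < \<mu> w}"
  have "finite C" using C aff_independent_finite by blast
  then have fin: "finite C" "finite D" unfolding D_def by auto
  have "D \<subseteq> C" unfolding D_def by auto
  then have DK: "convex hull D \<in> K" by (rule face_in_complex[OF S C])
  have "(\<Sum>w\<in>C. \<mu> w *\<^sub>R w) = (\<Sum>w\<in>D. \<mu> w *\<^sub>R w)" "sum \<mu> C = sum \<mu> D"
    using \<mu>(1) by (auto simp: D_def intro!: sum.mono_neutral_right[OF fin(1)])
  then have y: "(\<Sum>w\<in>C. \<mu> w *\<^sub>R w) \<in> convex hull D"
    using convex_comb_in_convex_hull[OF fin(2)] \<mu> unfolding D_def by auto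
  then obtain v where v: "v extreme_point_of convex hull D" "\<forall>x\<in>convex hull D. N (f v) \<le> N (f x)"
    using f_min DK by blast
  then have "v \<in> D" using extreme_point_of_convex_hull by blast
  then show ?thesis using v(2) y unfolding D_def by blast
qed

text \<open>Induction on the size of the support: the vertex of minimal norm in the support must be a
  zero of f; removing it and renormalising gives another zero of f with smaller support.\<close>
lemma f_vanishes_on_support:
  assumes S: "convex hull C \<in> K" and C: "\<not> affine_dependent C"
  shows "\<forall>w\<in>C. 0 \<le> \<mu> w \<Longrightarrow> sum \<mu> C = 1 \<Longrightarrow> f (\<Sum>w\<in>C. \<mu> w *\<^sub>R w) = 0 \<Longrightarrow>
    w \<in> C \<Longrightarrow> 0 < \<mu> w \<Longrightarrow> f w = 0"
proof (induction "card {w\<in>C. 0 < \<mu> w}" arbitrary: \<mu> rule: less_induct)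
  case less
  have fin: "finite C" using C aff_independent_finite by blast
  obtain v where v: "v \<in> C" "0 < \<mu> v" "N (f v) \<le> N (f (\<Sum>w\<in>C. \<mu> w *\<^sub>R w))"
    using min_norm_vertex_in_support[OF S C less.prems(1,2)] by blast
  have fv: "f v = 0"
    using v(3) less.prems(3) is_norm_eq_0[OF norm] is_norm_ge_zero[OF norm, of "f v"]
    by (simp add: is_norm_0[OF norm])
  have comb: "(\<Sum>w\<in>C. \<mu> w *\<^sub>R f w) = 0"
    using piecewise_linear_on_convex_comb[OF f_pl S fin less.prems(1,2)] less.prems(3) by simp
  have "\<mu> v \<le> 1" using member_le_sum[of v C \<mu>] less.prems(1,2) v(1) fin by simp
  show ?case
  proof (cases "\<mu> v = 1")
    case True
    then have "sum \<mu> (C - {v}) = 0" using less.prems(2) sum.remove[OF fin v(1), of \<mu>] by simp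
    then have "\<forall>u\<in>C - {v}. \<mu> u = 0"
      using sum_nonneg_eq_0_iff[of "C - {v}" \<mu>] fin less.prems(1) by auto
    then show ?thesis using fv less.prems(4,5) by (cases "w = v") auto
  next
    case False
    with \<open>\<mu> v \<le> 1\<close> have lt: "\<mu> v < 1" by simp
    define \<mu>' where "\<mu>' u = (\<mu> u - (if u = v then \<mu> v else 0)) / (1 - \<mu> v)" for u
    have \<mu>': "\<forall>u\<in>C. 0 \<le> \<mu>' u" "sum \<mu>' C = 1"
      using less.prems(1,2) lt v(1) fin unfolding \<mu>'_def
      by (auto simp: sum_divide_distrib[symmetric] sum_subtractf)
    have "(\<Sum>u\<in>C. \<mu>' u *\<^sub>R f u)
        = (1 / (1 - \<mu> v)) *\<^sub>R (\<Sum>u\<in>C. \<mu> u *\<^sub>R f u - (if u = v then \<mu> v *\<^sub>R f v else 0))"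
      unfolding \<mu>'_def scaleR_sum_right by (intro sum.cong) auto
    also have "\<dots> = (1 / (1 - \<mu> v)) *\<^sub>R ((\<Sum>u\<in>C. \<mu> u *\<^sub>R f u) - \<mu> v *\<^sub>R f v)"
      using v(1) fin by (simp add: sum_subtractf)
    finally have "(\<Sum>u\<in>C. \<mu>' u *\<^sub>R f u) = 0" using comb fv by simp
    then have "f (\<Sum>u\<in>C. \<mu>' u *\<^sub>R u) = 0"
      using piecewise_linear_on_convex_comb[OF f_pl S fin \<mu>'] by simp
    moreover have "{u\<in>C. 0 < \<mu>' u} \<subset> {u\<in>C. 0 < \<mu> u}"
      using v(1,2) lt unfolding \<mu>'_def by (auto simp: zero_less_divide_iff)
    then have "card {u\<in>C. 0 < \<mu>' u} < card {u\<in>C. 0 < \<mu> u}"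
      using fin by (intro psubset_card_mono) auto
    moreover have "0 < \<mu>' w" if "w \<noteq> v"
      using less.prems(5) lt that unfolding \<mu>'_def by simp
    ultimately show ?thesis using less.hyps[OF _ \<mu>'] less.prems(4) fv by blast
  qed
qed

end

lemma closedin_superlevel_set:
  fixes \<phi> :: "'a::topological_space \<Rightarrow> real"
  assumes "continuous_on P \<phi>"
  shows "closedin (top_of_set P) {x\<in>P. c \<le> \<phi> x}"
proof -
  have "closedin (top_of_set P) (P \<inter> \<phi> -` {c..})"
    by (rule continuous_closedin_preimage[OF assms]) simp
  moreover have "P \<inter> \<phi> -` {c..} = {x\<in>P. c \<le> \<phi> x}" by auto
  ultimately show ?thesis by simp
qed

section \<open>Pushing points off the low vertices\<close>

locale threshold_complex = min_norm_at_vertices K N f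
  for K :: "'a::euclidean_space set set" and N :: "'b::euclidean_space \<Rightarrow> real" and f +
  fixes chi :: "'a \<Rightarrow> real" and alpha :: real
  assumes alpha: "0 < alpha"
    and chi_pl: "piecewise_linear_on K chi"
    and chi_vert: "\<forall>v\<in>cvertices K.
      chi v = (if N (f v) < alpha then 0 else if N (f v) = alpha then 1/2 else 1)"
begin

text \<open>Deleting the low vertices (N (f v) < alpha) from the barycentric coordinates of x and
  renormalising gives the point push x on the opposite face of the carrier of x; this is
  meaningful only when low_mass x < 1.\<close>

definition low :: "'a \<Rightarrow> real" where
  "low v = (if N (f v) < alpha then 1 else 0)"

definition low_mass :: "'a \<Rightarrow> real" where
  "low_mass x = (\<Sum>v\<in>cvertices K. bary x v * low v)"

definition push :: "'a \<Rightarrow> 'a" where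
  "push x = (1 / (1 - low_mass x)) *\<^sub>R (\<Sum>v\<in>cvertices K. (bary x v * (1 - low v)) *\<^sub>R v)"

definition push_path :: "real \<Rightarrow> 'a \<Rightarrow> 'a" where
  "push_path t x = (1 - t) *\<^sub>R x + t *\<^sub>R push x"

definition push_coords :: "real \<Rightarrow> 'a \<Rightarrow> 'a \<Rightarrow> real" where
  "push_coords t x w = (1 - t) * bary x w + t * (bary x w * (1 - low w) / (1 - low_mass x))"

lemma chi_vertex_bounds:
  assumes "v \<in> cvertices K"
  shows "chi v \<le> 1 - low v" "low v = 0 \<Longrightarrow> 1/2 \<le> chi v"
  using chi_vert assms unfolding low_def by auto

lemma push_path_0 [simp]: "push_path 0 x = x"
  and push_path_1 [simp]: "push_path 1 x = push x"
  unfolding push_path_def by simp_all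

lemma continuous_on_low_mass: "continuous_on (polyhedron K) low_mass"
  unfolding low_mass_def[abs_def] by (intro continuous_intros continuous_on_bary)

lemma continuous_on_push_path:
  assumes "Z \<subseteq> polyhedron K" "\<forall>x\<in>Z. low_mass x < 1"
  shows "continuous_on ({0..1} \<times> Z) (\<lambda>p. push_path (fst p) (snd p))"
proof -
  have "continuous_on Z low_mass" "\<And>v. continuous_on Z (\<lambda>x. bary x v)"
    using continuous_on_low_mass continuous_on_bary assms(1) by (blast intro: continuous_on_subset)+
  then have "continuous_on Z push" using assms(2) unfolding push_def[abs_def]
    by (intro continuous_intros) auto
  then have "continuous_on ({0..1} \<times> Z) (\<lambda>p. push (snd p))"
    by (rule continuous_on_compose2[OF _ continuous_on_snd]) auto
  then show ?thesis unfolding push_path_def by (intro continuous_intros) auto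
qed

context
  fixes x assumes x: "x \<in> polyhedron K"
begin

lemma low_mass_carrier: "low_mass x = (\<Sum>w\<in>carrier x. bary x w * low w)"
  unfolding low_mass_def by (rule sum_cvertices_eq_sum_carrier[OF x]) simp

lemma high_mass_carrier: "(\<Sum>w\<in>carrier x. bary x w * (1 - low w)) = 1 - low_mass x"
  using sum_bary_carrier[OF x] unfolding low_mass_carrier by (simp add: algebra_simps sum_subtractf)

lemma low_mass_nonneg: "0 \<le> low_mass x"
  unfolding low_mass_carrier using bary_nonneg[OF x] by (simp add: sum_nonneg low_def)

lemma low_mass_le_1: "low_mass x \<le> 1"
proof -
  have "0 \<le> (\<Sum>w\<in>carrier x. bary x w * (1 - low w))"
    using bary_nonneg[OF x] by (intro sum_nonneg) (simp add: low_def)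
  then show ?thesis using high_mass_carrier by simp
qed

lemma low_mass_lt_1_if_norm_ge:
  assumes "alpha \<le> N (f x)"
  shows "low_mass x < 1"
proof (rule ccontr)
  assume "\<not> low_mass x < 1"
  then have "(\<Sum>w\<in>carrier x. bary x w * (1 - low w)) = 0" using high_mass_carrier low_mass_le_1 by simp
  moreover have "0 \<le> bary x w * (1 - low w)" for w using bary_nonneg[OF x] by (simp add: low_def)
  ultimately have high_zero: "bary x w * (1 - low w) = 0" if "w \<in> carrier x" for w
    using sum_nonneg_eq_0_iff[OF finite_carrier[OF x], of "\<lambda>w. bary x w * (1 - low w)"] that
    by simp
  have below: "N (f w) < alpha" if "w \<in> carrier x" "0 < bary x w" for w
    using high_zero[OF that(1)] that(2) unfolding low_def by (auto split: if_splits)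
  have "\<exists>w\<in>carrier x. bary x w \<noteq> 0"
    using sum_bary_carrier[OF x] sum.neutral by (metis zero_neq_one)
  then obtain w where w: "w \<in> carrier x" "0 < bary x w"
    using bary_nonneg[OF x] by (metis less_eq_real_def)
  have "N (f x) \<le> (\<Sum>w\<in>carrier x. bary x w * N (f w))"
    unfolding piecewise_linear_carrier_expansion[OF x f_pl]
    by (rule is_norm_sum_scaleR_le[OF norm finite_carrier[OF x]]) (simp add: bary_nonneg[OF x])
  also have "\<dots> < (\<Sum>w\<in>carrier x. bary x w * alpha)"
  proof (rule sum_strict_mono_ex1[OF finite_carrier[OF x]])
    show "\<forall>w\<in>carrier x. bary x w * N (f w) \<le> bary x w * alpha"
    proof
      fix w assume "w \<in> carrier x"
      then show "bary x w * N (f w) \<le> bary x w * alpha"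
        using below[of w] bary_nonneg[OF x, of w] by (cases "bary x w = 0") auto
    qed
    show "\<exists>w\<in>carrier x. bary x w * N (f w) < bary x w * alpha"
      using w below[OF w] by (intro bexI[of _ w] mult_strict_left_mono) auto
  qed
  also have "\<dots> = alpha" using sum_bary_carrier[OF x] by (simp add: sum_distrib_right[symmetric])
  finally show False using assms by simp
qed

lemma low_mass_le_half_if_chi_ge:
  assumes "1/2 \<le> chi x"
  shows "low_mass x \<le> 1/2"
proof -
  have "chi x = (\<Sum>w\<in>carrier x. bary x w * chi w)"
    using piecewise_linear_carrier_expansion[OF x chi_pl] by simp
  also have "\<dots> \<le> (\<Sum>w\<in>carrier x. bary x w * (1 - low w))"
    using bary_nonneg[OF x] chi_vertex_bounds(1) carrier_subset_cvertices[OF x]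
    by (intro sum_mono mult_left_mono) auto
  finally show ?thesis using high_mass_carrier assms by simp
qed

context
  assumes low_mass: "low_mass x < 1"
begin

lemma push_coords_nonneg: "t \<in> {0..1} \<Longrightarrow> 0 \<le> push_coords t x w"
  using bary_nonneg[OF x] low_mass unfolding push_coords_def low_def by simp

lemma sum_push_coords: "sum (push_coords t x) (carrier x) = 1"
proof -
  have "sum (push_coords t x) (carrier x) = (1 - t) * sum (bary x) (carrier x)
      + t * ((\<Sum>w\<in>carrier x. bary x w * (1 - low w)) / (1 - low_mass x))"
    unfolding push_coords_def by (simp add: sum.distrib sum_distrib_left sum_divide_distrib)
  then show ?thesis using sum_bary_carrier[OF x] high_mass_carrier low_mass by simp
qed

lemma push_path_carrier_comb: "push_path t x = (\<Sum>w\<in>carrier x. push_coords t x w *\<^sub>R w)"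
proof -
  have "(\<Sum>v\<in>cvertices K. (bary x v * (1 - low v)) *\<^sub>R v)
      = (\<Sum>v\<in>carrier x. (bary x v * (1 - low v)) *\<^sub>R v)"
    by (rule sum_cvertices_eq_sum_carrier[OF x]) simp
  then have "push x = (\<Sum>w\<in>carrier x. (bary x w * (1 - low w) / (1 - low_mass x)) *\<^sub>R w)"
    unfolding push_def by (simp add: scaleR_sum_right divide_inverse mult.commute)
  moreover have "(1 - t) *\<^sub>R x = (\<Sum>w\<in>carrier x. ((1 - t) * bary x w) *\<^sub>R w)"
    unfolding scaleR_scaleR[symmetric] scaleR_sum_right[symmetric] bary_carrier_comb[OF x] ..
  ultimately show ?thesis
    unfolding push_path_def push_coords_def scaleR_add_left sum.distrib by (simp add: scaleR_sum_right)
qed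

lemma push_path_in_polyhedron: "t \<in> {0..1} \<Longrightarrow> push_path t x \<in> polyhedron K"
  using convex_comb_in_convex_hull[OF finite_carrier[OF x] _ sum_push_coords] push_coords_nonneg
    carrier_simplex(1)[OF x] unfolding push_path_carrier_comb polyhedron_def by blast

lemma piecewise_linear_push_path:
  "piecewise_linear_on K \<phi> \<Longrightarrow> t \<in> {0..1} \<Longrightarrow>
    \<phi> (push_path t x) = (\<Sum>w\<in>carrier x. push_coords t x w *\<^sub>R \<phi> w)"
  unfolding push_path_carrier_comb
  using push_coords_nonneg sum_push_coords
  by (intro piecewise_linear_on_convex_comb[OF _ carrier_simplex(1)[OF x] finite_carrier[OF x]]) auto

text \<open>Some high vertex carries positive weight along the whole path, and f does not vanish there.\<close>
lemma f_push_path_neq_0: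
  assumes t: "t \<in> {0..1}"
  shows "f (push_path t x) \<noteq> 0"
proof
  assume "f (push_path t x) = 0"
  then have zero: "f w = 0" if "w \<in> carrier x" "0 < push_coords t x w" for w
    using f_vanishes_on_support[OF carrier_simplex(1,2)[OF x] _ sum_push_coords, of t w]
      push_coords_nonneg[OF t] that unfolding push_path_carrier_comb by blast
  have pos: "0 < (\<Sum>w\<in>carrier x. bary x w * (1 - low w))" using high_mass_carrier low_mass by simp
  have "\<exists>w\<in>carrier x. 0 < bary x w * (1 - low w)"
  proof (rule ccontr)
    assume "\<not> ?thesis"
    then have "(\<Sum>w\<in>carrier x. bary x w * (1 - low w)) \<le> 0" by (intro sum_nonpos) (simp add: not_less)
    then show False using pos by simp
  qed
  then obtain w where w: "w \<in> carrier x" "0 < bary x w * (1 - low w)" ..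
  then have high: "low w = 0" "0 < bary x w" by (auto simp: low_def split: if_splits)
  have "bary x w \<le> bary x w / (1 - low_mass x)"
    using high(2) low_mass low_mass_nonneg by (simp add: le_divide_eq)
  then have "t * bary x w \<le> t * (bary x w / (1 - low_mass x))"
    by (rule mult_left_mono) (use t in auto)
  then have "bary x w \<le> push_coords t x w"
    using high(1) unfolding push_coords_def by (simp add: algebra_simps)
  then have "f w = 0" using zero w(1) high(2) by simp
  then show False using high(1) alpha is_norm_0[OF norm] unfolding low_def by simp
qed

lemma norm_f_push_ge: "alpha \<le> N (f (push x))"
proof -
  obtain v where v: "v \<in> carrier x" "0 < push_coords 1 x v" "N (f v) \<le> N (f (push x))"
    using min_norm_vertex_in_support[OF carrier_simplex(1,2)[OF x] _ sum_push_coords]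
      push_coords_nonneg[of 1] push_path_carrier_comb[of 1] by auto
  then have "low v = 0" unfolding push_coords_def low_def by (auto split: if_splits)
  then show ?thesis using v(3) unfolding low_def by (simp split: if_splits)
qed

lemma chi_push_ge: "1/2 \<le> chi (push x)"
proof -
  have "(\<Sum>w\<in>carrier x. push_coords 1 x w * (1/2)) \<le> (\<Sum>w\<in>carrier x. push_coords 1 x w * chi w)"
  proof (rule sum_mono)
    fix w assume w: "w \<in> carrier x"
    show "push_coords 1 x w * (1/2) \<le> push_coords 1 x w * chi w"
    proof (cases "low w = 0")
      case True
      then have "1/2 \<le> chi w" using chi_vertex_bounds(2) carrier_subset_cvertices[OF x] w by blast
      then show ?thesis by (rule mult_left_mono) (use push_coords_nonneg[of 1 w] in simp)
    next
      case False
      then have "N (f w) < alpha" unfolding low_def by (simp split: if_splits)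
      then show ?thesis unfolding push_coords_def low_def by simp
    qed
  qed
  then show ?thesis
    using piecewise_linear_push_path[OF chi_pl, of 1] sum_push_coords[of 1]
    by (simp add: sum_divide_distrib[symmetric])
qed

lemma f_push_path_decomposition:
  fixes t :: real
  assumes t: "t \<in> {0..1}"
  defines "d \<equiv> t / (1 - low_mass x)"
  shows "f (push_path t x) =
    (1 - t + d) *\<^sub>R f x - d *\<^sub>R (\<Sum>w\<in>carrier x. (bary x w * low w) *\<^sub>R f w)"
proof -
  have "push_coords t x w = (1 - t + d) * bary x w - d * (bary x w * low w)" for w
    unfolding push_coords_def d_def using low_mass by (simp add: diff_divide_distrib algebra_simps)
  then have "f (push_path t x) =
      (\<Sum>w\<in>carrier x. ((1 - t + d) * bary x w) *\<^sub>R f w - (d * (bary x w * low w)) *\<^sub>R f w)"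
    unfolding piecewise_linear_push_path[OF f_pl t] by (simp add: scaleR_diff_left)
  then show ?thesis
    using piecewise_linear_carrier_expansion[OF x f_pl]
    by (simp add: sum_subtractf scaleR_sum_right)
qed

lemma norm_low_part_le: "N (\<Sum>w\<in>carrier x. (bary x w * low w) *\<^sub>R f w) \<le> low_mass x * alpha"
proof -
  have "N (\<Sum>w\<in>carrier x. (bary x w * low w) *\<^sub>R f w) \<le> (\<Sum>w\<in>carrier x. (bary x w * low w) * N (f w))"
    using bary_nonneg[OF x] by (intro is_norm_sum_scaleR_le[OF norm finite_carrier[OF x]]) (simp add: low_def)
  also have "\<dots> \<le> (\<Sum>w\<in>carrier x. (bary x w * low w) * alpha)"
    using bary_nonneg[OF x] by (intro sum_mono) (simp add: low_def mult_left_mono)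
  also have "\<dots> = low_mass x * alpha" unfolding low_mass_carrier by (simp add: sum_distrib_right)
  finally show ?thesis .
qed

text \<open>Reverse triangle inequality on the decomposition above: the loss d * low_mass x * alpha
  is exactly compensated by the extra weight d - t on f x.\<close>
lemma norm_f_push_path_ge:
  assumes t: "t \<in> {0..1}" and fx: "alpha \<le> N (f x)"
  shows "alpha \<le> N (f (push_path t x))"
proof -
  define d where "d = t / (1 - low_mass x)"
  have d: "0 \<le> d" "d * (1 - low_mass x) = t" using t low_mass unfolding d_def by auto
  have "(1 - t + d) * alpha \<le> (1 - t + d) * N (f x)"
    using t d(1) fx by (intro mult_left_mono) auto
  moreover have "d * N (\<Sum>w\<in>carrier x. (bary x w * low w) *\<^sub>R f w) \<le> d * (low_mass x * alpha)"
    using norm_low_part_le d(1) by (rule mult_left_mono)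
  moreover have "alpha = (1 - t + d) * alpha - d * (low_mass x * alpha)"
    using arg_cong[OF d(2), of "\<lambda>s. s * alpha"] by (simp add: algebra_simps)
  ultimately have "alpha \<le> (1 - t + d) * N (f x) - d * N (\<Sum>w\<in>carrier x. (bary x w * low w) *\<^sub>R f w)"
    by linarith
  also have "\<dots> = N ((1 - t + d) *\<^sub>R f x) - N (d *\<^sub>R (\<Sum>w\<in>carrier x. (bary x w * low w) *\<^sub>R f w))"
    using t d(1) by (simp add: is_norm_scaleR[OF norm])
  also have "\<dots> \<le> N (f (push_path t x))"
    unfolding f_push_path_decomposition[OF t] d_def[symmetric] by (rule is_norm_diff_ge[OF norm])
  finally show ?thesis .
qed

end

end

lemma f_neq_0_if_chi_ge:
  assumes "x \<in> polyhedron K" "1/2 \<le> chi x"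
  shows "f x \<noteq> 0"
proof -
  have "low_mass x < 1" using low_mass_le_half_if_chi_ge[OF assms] by simp
  then show ?thesis using f_push_path_neq_0[OF assms(1) _, of 0] by simp
qed

text \<open>On a closed set Za where the push path never meets a zero of f and ends in Zb, a map H
  agreeing with f on Zb is homotopic to f on Za (first along H \<circ> push_path, then back along
  f \<circ> push_path); Borsuk's homotopy extension theorem turns this into an extension of f|Za.\<close>
lemma has_nonvanishing_extension_transfer:
  assumes Za: "closedin (top_of_set (polyhedron K)) Za"
    and low_mass: "\<forall>x\<in>Za. low_mass x < 1"
    and nz: "\<forall>x\<in>Za. \<forall>t\<in>{0..1}. f (push_path t x) \<noteq> 0"
    and push: "\<forall>x\<in>Za. push x \<in> Zb"
    and Zb: "has_nonvanishing_extension (polyhedron K) Zb f"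
  shows "has_nonvanishing_extension (polyhedron K) Za f"
proof -
  obtain H where H: "continuous_on (polyhedron K) H" "H ` polyhedron K \<subseteq> - {0}" "\<forall>x\<in>Zb. H x = f x"
    using Zb unfolding has_nonvanishing_extension_def by blast
  have sub: "Za \<subseteq> polyhedron K" using closedin_imp_subset[OF Za] .
  have path_in: "push_path t x \<in> polyhedron K" if "x \<in> Za" "t \<in> {0..1}" for x t
    using push_path_in_polyhedron[OF _ _ that(2)] sub low_mass that(1) by blast
  have path: "continuous_on ({0..1} \<times> Za) (\<lambda>p. push_path (fst p) (snd p))"
    by (rule continuous_on_push_path[OF sub low_mass])
  have flip: "continuous_on ({0..1} \<times> Za) (\<lambda>p. push_path (1 - fst p) (snd p))"
  proof -
    have "continuous_on ({0..1} \<times> Za) (\<lambda>p::real \<times> 'a. (1 - fst p, snd p))"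
      by (intro continuous_intros)
    moreover have "(\<lambda>p::real \<times> 'a. (1 - fst p, snd p)) ` ({0..1} \<times> Za) \<subseteq> {0..1} \<times> Za" by auto
    ultimately show ?thesis using continuous_on_compose2[OF path] by fastforce
  qed
  have "homotopic_with_canon (\<lambda>x. True) Za (- {0}) H (\<lambda>x. f (push x))"
  proof (rule homotopic_with_canon_intro[where k="\<lambda>p. H (push_path (fst p) (snd p))"])
    show "continuous_on ({0..1} \<times> Za) (\<lambda>p. H (push_path (fst p) (snd p)))"
      by (rule continuous_on_compose2[OF H(1) path]) (use path_in in auto)
    show "(\<lambda>p. H (push_path (fst p) (snd p))) ` ({0..1} \<times> Za) \<subseteq> - {0}"
      using path_in H(2) by fastforce
  qed (use H(3) push in simp_all)
  moreover have "homotopic_with_canon (\<lambda>x. True) Za (- {0}) (\<lambda>x. f (push x)) f"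
  proof (rule homotopic_with_canon_intro[where k="\<lambda>p. f (push_path (1 - fst p) (snd p))"])
    show "continuous_on ({0..1} \<times> Za) (\<lambda>p. f (push_path (1 - fst p) (snd p)))"
      by (rule continuous_on_compose2[OF continuous_on_piecewise_linear[OF f_pl] flip])
        (use path_in in auto)
    show "(\<lambda>p. f (push_path (1 - fst p) (snd p))) ` ({0..1} \<times> Za) \<subseteq> - {0}" using nz by force
  qed auto
  ultimately have hom: "homotopic_with_canon (\<lambda>x. True) Za (- {0}) H f"
    by (rule homotopic_with_trans)
  have "ANR (- {0::'b})" by (simp add: open_imp_ANR open_Compl)
  moreover have "H \<in> polyhedron K \<rightarrow> - {0}" using H(2) by blast
  ultimately obtain H' where "continuous_on (polyhedron K) H'" "H' ` polyhedron K \<subseteq> - {0}"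
    "\<And>x. x \<in> Za \<Longrightarrow> H' x = f x"
    using Borsuk_homotopy_extension_homotopic[OF Za _ H(1) _ hom] by metis
  then show ?thesis unfolding has_nonvanishing_extension_def by blast
qed

lemma continuous_on_norm_f: "continuous_on (polyhedron K) (\<lambda>x. N (f x))"
  using continuous_on_compose2[OF continuous_on_is_norm[OF norm]
      continuous_on_piecewise_linear[OF f_pl]] by blast

lemma has_nonvanishing_extension_superlevel_iff:
  "has_nonvanishing_extension (polyhedron K) {x\<in>polyhedron K. alpha \<le> N (f x)} f
    \<longleftrightarrow> has_nonvanishing_extension (polyhedron K) {x\<in>polyhedron K. 1/2 \<le> chi x} f"
proof
  let ?Z1 = "{x\<in>polyhedron K. alpha \<le> N (f x)}" and ?Z2 = "{x\<in>polyhedron K. 1/2 \<le> chi x}"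
  assume "has_nonvanishing_extension (polyhedron K) ?Z2 f"
  then show "has_nonvanishing_extension (polyhedron K) ?Z1 f"
  proof (rule has_nonvanishing_extension_transfer[rotated 4])
    show "closedin (top_of_set (polyhedron K)) ?Z1"
      by (rule closedin_superlevel_set[OF continuous_on_norm_f])
    show low: "\<forall>x\<in>?Z1. low_mass x < 1" using low_mass_lt_1_if_norm_ge by blast
    show "\<forall>x\<in>?Z1. \<forall>t\<in>{0..1}. f (push_path t x) \<noteq> 0"
    proof (intro ballI)
      fix x and t :: real assume "x \<in> ?Z1" "t \<in> {0..1}"
      then have "alpha \<le> N (f (push_path t x))" using norm_f_push_path_ge low by blast
      then show "f (push_path t x) \<noteq> 0" using alpha is_norm_0[OF norm] by auto
    qed
    show "\<forall>x\<in>?Z1. push x \<in> ?Z2"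
      using chi_push_ge push_path_in_polyhedron[of _ 1] low by auto
  qed
next
  let ?Z1 = "{x\<in>polyhedron K. alpha \<le> N (f x)}" and ?Z2 = "{x\<in>polyhedron K. 1/2 \<le> chi x}"
  assume "has_nonvanishing_extension (polyhedron K) ?Z1 f"
  then show "has_nonvanishing_extension (polyhedron K) ?Z2 f"
  proof (rule has_nonvanishing_extension_transfer[rotated 4])
    show "closedin (top_of_set (polyhedron K)) ?Z2"
      by (rule closedin_superlevel_set[OF continuous_on_piecewise_linear[OF chi_pl]])
    show low: "\<forall>x\<in>?Z2. low_mass x < 1" using low_mass_le_half_if_chi_ge by fastforce
    show "\<forall>x\<in>?Z2. \<forall>t\<in>{0..1}. f (push_path t x) \<noteq> 0" using f_push_path_neq_0 low by blast
    show "\<forall>x\<in>?Z2. push x \<in> ?Z1"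
      using norm_f_push_ge push_path_in_polyhedron[of _ 1] low by auto
  qed
qed

end

theorem corollary3p5:
  fixes K :: "'a::euclidean_space set set"
    and N :: "real^'n \<Rightarrow> real"
    and f :: "'a \<Rightarrow> real^'n"
    and chi :: "'a \<Rightarrow> real"
    and alpha :: real
  assumes K: "simplicial_complex K"
    and N: "is_norm N"
    and f_pl: "piecewise_linear_on K f"
    and f_min: "\<forall>S\<in>K. S \<noteq> {} \<longrightarrow>
                 (\<exists>v. v extreme_point_of S \<and> (\<forall>x\<in>S. N (f v) \<le> N (f x)))"
    and f_max: "\<forall>S\<in>K. S \<noteq> {} \<longrightarrow>
                 (\<exists>v. v extreme_point_of S \<and> (\<forall>x\<in>S. N (f x) \<le> N (f v)))"
    and alpha: "alpha > 0"
    and chi_pl: "piecewise_linear_on K chi"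
    and chi_vert: "\<forall>v\<in>cvertices K.
                 chi v = (if N (f v) < alpha then 0 else if N (f v) = alpha then 1/2 else 1)"
  shows "(\<exists>F. continuous_on {x \<in> polyhedron K. N (f x) \<le> alpha} F \<and>
              F ` {x \<in> polyhedron K. N (f x) \<le> alpha} \<subseteq> - {0} \<and>
              (\<forall>x \<in> {x \<in> polyhedron K. N (f x) = alpha}. F x = f x))
     \<longleftrightarrow>
         (\<exists>G. continuous_on {x \<in> polyhedron K. chi x \<le> 1/2} G \<and>
              G ` {x \<in> polyhedron K. chi x \<le> 1/2} \<subseteq> - {0} \<and>
              (\<forall>x \<in> {x \<in> polyhedron K. chi x = 1/2}. G x = f x))"
proof -
  interpret threshold_complex K N f chi alpha
    by unfold_locales (use K N f_pl f_min alpha chi_pl chi_vert in auto)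
  have "has_nonvanishing_extension {x \<in> polyhedron K. N (f x) \<le> alpha}
      {x \<in> polyhedron K. N (f x) = alpha} f
    \<longleftrightarrow> has_nonvanishing_extension (polyhedron K) {x \<in> polyhedron K. alpha \<le> N (f x)} f"
    by (rule has_nonvanishing_extension_sublevel_iff[OF continuous_on_norm_f
          continuous_on_piecewise_linear[OF f_pl]])
      (use alpha is_norm_0[OF N] in force)
  moreover have "has_nonvanishing_extension {x \<in> polyhedron K. chi x \<le> 1/2}
      {x \<in> polyhedron K. chi x = 1/2} f
    \<longleftrightarrow> has_nonvanishing_extension (polyhedron K) {x \<in> polyhedron K. 1/2 \<le> chi x} f"
    by (rule has_nonvanishing_extension_sublevel_iff[OF continuous_on_piecewise_linear[OF chi_pl]
          continuous_on_piecewise_linear[OF f_pl]])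
      (use f_neq_0_if_chi_ge in blast)
  ultimately show ?thesis
    unfolding has_nonvanishing_extension_def[symmetric]
    using has_nonvanishing_extension_superlevel_iff by simp
qed

end
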